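(* $\det(AA^\top)\ge\rho(A)^{2n}$.
   Context: $A=[a_1|\cdots|a_m]\in\mathbb{R}^{n\times m}$ has columns of unit Euclidean norm and $\{A\lambda:\lambda\ge0\}=\mathbb{R}^n$. For a matrix $M$, $\|M\|_{1,2}:=\max_{\|w\|_1=1}\|Mw\|_2$. Define $\rho(A):=\min_{\Delta A\in\mathbb{R}^{n\times m}}\{\|\Delta A\|_{1,2}:\ \exists\,v\neq0 \text{ with } (A+\Delta A)^\top v\le0\}$. *)

theory Defs
  imports "HOL-Analysis.Analysis"
begin

text \<open>Matrices \<open>real^'m^'n\<close> are n x m (n rows indexed by 'n, m columns indexed by 'm).\<close>

definition norm12 :: "real^'m^'n \<Rightarrow> real" where
  "norm12 M = Sup {norm (M *v w) | w. (\<Sum>j\<in>UNIV. \<bar>w $ j\<bar>) = 1}"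

definition rho :: "real^'m^'n \<Rightarrow> real" where
  "rho A = Inf {norm12 dA | dA. \<exists>v::real^'n. v \<noteq> 0 \<and>
                  (\<forall>j. (transpose (A + dA) *v v) $ j \<le> 0)}"

end

theory Submission imports Defs begin

text \<open>For a unit vector \<open>u\<close>, the rank-one perturbation \<open>-u (A\<^sup>T u)\<^sup>T\<close> annihilates \<open>A\<^sup>T u\<close> and has
  (1,2)-norm at most \<open>|A\<^sup>T u|\<close>; hence \<open>\<rho>(A) |v| \<le> |A\<^sup>T v|\<close> for every \<open>v\<close>.
  Unnormalised Gram--Schmidt on the rows of \<open>A\<close> gives a matrix \<open>P\<close> with \<open>det P = 1\<close> and unit
  diagonal such that \<open>PA\<close> has orthogonal rows \<open>A\<^sup>T p\<^sub>i\<close>. Then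
  \<open>det (AA\<^sup>T) = det (PA (PA)\<^sup>T) = \<Prod>\<^sub>i |A\<^sup>T p\<^sub>i|\<^sup>2 \<ge> \<Prod>\<^sub>i \<rho>(A)\<^sup>2 |p\<^sub>i|\<^sup>2 \<ge> \<rho>(A)\<^sup>2\<^sup>n\<close>.\<close>

lemma norm_matrix_vector_le_sum_norm_column:
  fixes M :: "real^'m^'n"
  assumes "(\<Sum>j\<in>UNIV. \<bar>w $ j\<bar>) = 1"
  shows "norm (M *v w) \<le> (\<Sum>j\<in>UNIV. norm (column j M))"
proof -
  have "norm (M *v w) \<le> (\<Sum>j\<in>UNIV. norm (w$j *s column j M))"
    unfolding matrix_mult_sum by (rule norm_sum)
  also have "\<dots> = (\<Sum>j\<in>UNIV. \<bar>w$j\<bar> * norm (column j M))"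
    by (simp add: scalar_mult_eq_scaleR)
  also have "\<dots> \<le> (\<Sum>j\<in>UNIV. norm (column j M))"
  proof (rule sum_mono)
    fix j
    have "\<bar>w$j\<bar> \<le> 1" using assms member_le_sum[of j UNIV "\<lambda>j. \<bar>w$j\<bar>"] by auto
    then show "\<bar>w$j\<bar> * norm (column j M) \<le> norm (column j M)"
      by (simp add: mult_left_le_one_le)
  qed
  finally show ?thesis .
qed

lemma sum_abs_axis_eq_1: "(\<Sum>k\<in>UNIV. \<bar>axis j (1::real) $ k\<bar>) = 1"
  by (simp add: axis_def if_distrib cong: if_cong)

lemma norm12_upper:
  fixes M :: "real^'m^'n"
  assumes "(\<Sum>j\<in>UNIV. \<bar>w $ j\<bar>) = 1"
  shows "norm (M *v w) \<le> norm12 M"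
  unfolding norm12_def using assms norm_matrix_vector_le_sum_norm_column
  by (intro cSup_upper bdd_aboveI) blast+

lemma norm12_least:
  fixes M :: "real^'m^'n"
  assumes "\<And>w. (\<Sum>j\<in>UNIV. \<bar>w $ j\<bar>) = 1 \<Longrightarrow> norm (M *v w) \<le> c"
  shows "norm12 M \<le> c"
  unfolding norm12_def using assms sum_abs_axis_eq_1 by (intro cSup_least) blast+

lemma norm12_nonneg: "0 \<le> norm12 (M::real^'m^'n)"
  using norm12_upper[OF sum_abs_axis_eq_1] norm_ge_zero order_trans by blast

lemma norm12_outer_le:
  fixes u :: "real^'n" and g :: "real^'m"
  shows "norm12 (\<chi> k j. u$k * g$j) \<le> norm u * norm g"
proof (rule norm12_least)
  fix w :: "real^'m" assume w: "(\<Sum>j\<in>UNIV. \<bar>w $ j\<bar>) = 1"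
  have "(\<chi> k j. u$k * g$j) *v w = (g \<bullet> w) *\<^sub>R u"
    by (simp add: vec_eq_iff matrix_vector_mult_def inner_vec_def sum_distrib_left algebra_simps)
  then have "norm ((\<chi> k j. u$k * g$j) *v w) = norm u * \<bar>g \<bullet> w\<bar>" by simp
  also have "\<bar>g \<bullet> w\<bar> \<le> (\<Sum>j\<in>UNIV. \<bar>g$j\<bar> * \<bar>w$j\<bar>)"
    unfolding inner_vec_def by (rule order_trans[OF sum_abs]) (simp add: abs_mult)
  also have "\<dots> \<le> (\<Sum>j\<in>UNIV. norm g * \<bar>w$j\<bar>)"
    by (intro sum_mono mult_right_mono component_le_norm_cart) auto
  also have "\<dots> = norm g" using w by (simp add: sum_distrib_left[symmetric])
  finally show "norm ((\<chi> k j. u$k * g$j) *v w) \<le> norm u * norm g"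
    by (simp add: mult_left_mono)
qed

lemma rho_le_norm12:
  fixes A dA :: "real^'m^'n"
  assumes "v \<noteq> 0" and "\<forall>j. (transpose (A + dA) *v v) $ j \<le> 0"
  shows "rho A \<le> norm12 dA"
  unfolding rho_def using assms norm12_nonneg
  by (intro cInf_lower bdd_belowI[of _ 0]) blast+

lemma rho_nonneg: "0 \<le> rho (A::real^'m^'n)"
proof -
  have "{norm12 dA | dA. \<exists>v::real^'n. v \<noteq> 0 \<and> (\<forall>j. (transpose (A + dA) *v v) $ j \<le> 0)} \<noteq> {}"
    by (intro ex_in_conv[THEN iffD1] exI[of _ "norm12 (-A)"]) (force simp: axis_eq_0_iff)
  then show ?thesis
    unfolding rho_def using norm12_nonneg by (intro cInf_greatest) auto
qed

lemma rho_mult_norm_le: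
  fixes A :: "real^'m^'n" and v :: "real^'n"
  shows "rho A * norm v \<le> norm (transpose A *v v)"
proof (cases "v = 0")
  case False
  define u where "u = v /\<^sub>R norm v"
  define g where "g = transpose A *v u"
  define dA :: "real^'m^'n" where "dA = (\<chi> k j. u$k * (- g)$j)"
  have norm_u: "norm u = 1" using False by (simp add: u_def)
  have "transpose dA *v u = (u \<bullet> u) *\<^sub>R (- g)"
    by (simp add: dA_def vec_eq_iff matrix_vector_mult_def transpose_def inner_vec_def
        sum_distrib_left sum_negf algebra_simps)
  moreover have "transpose (A + dA) = transpose A + transpose dA"
    by (simp add: transpose_def vec_eq_iff)
  ultimately have "transpose (A + dA) *v u = 0"
    using norm_u by (simp add: g_def matrix_vector_mult_add_rdistrib norm_eq_1)
  then have "transpose (A + dA) *v v = 0"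
    using False by (simp add: u_def matrix_vector_mult_scaleR)
  then have "rho A \<le> norm12 dA"
    using False by (intro rho_le_norm12[of v]) auto
  also have "norm12 dA \<le> norm g"
    using norm12_outer_le[of u "-g"] norm_u by (simp add: dA_def)
  finally have "rho A * norm v \<le> norm g * norm v" by (simp add: mult_right_mono)
  also have "norm g * norm v = norm (transpose A *v v)"
    using False by (simp add: g_def u_def matrix_vector_mult_scaleR)
  finally show ?thesis .
qed simp

definition orthogonalizer_on :: "(real^'n \<Rightarrow> 'a::real_inner) \<Rightarrow> 'n set \<Rightarrow> real^'n^'n \<Rightarrow> bool"
  where "orthogonalizer_on f S P \<longleftrightarrow> det P = 1
    \<and> (\<forall>i. i \<notin> S \<longrightarrow> P $ i = axis i 1)
    \<and> (\<forall>i\<in>S. P$i$i = 1 \<and> (\<forall>k. k \<notin> S \<longrightarrow> P$i$k = 0))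
    \<and> (\<forall>i\<in>S. \<forall>j\<in>S. i \<noteq> j \<longrightarrow> orthogonal (f (P$i)) (f (P$j)))"

lemma orthogonalizer_on_empty:
  fixes f :: "real^'n \<Rightarrow> 'a::real_inner"
  shows "orthogonalizer_on f {} (mat 1)"
proof -
  have "(mat 1 :: real^'n^'n) $ i = axis i 1" for i
    by (simp add: mat_def axis_def vec_eq_iff)
  then show ?thesis by (simp add: orthogonalizer_on_def det_I)
qed

lemma row_eq_vec_nth: "row k M = M $ k"
  by (simp add: row_def)

lemma span_component_eq_0:
  fixes R :: "(real^'n) set"
  assumes "w \<in> span R" and "\<And>x. x \<in> R \<Longrightarrow> x $ k = 0"
  shows "w $ k = 0"
proof -
  have "subspace {x::real^'n. x $ k = 0}" by (simp add: subspace_def)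
  then show ?thesis using span_induct[OF assms(1), of "\<lambda>x. x $ k = 0"] assms(2) by auto
qed

text \<open>The new row \<open>e\<^sub>i - w\<close> subtracts from \<open>e\<^sub>i\<close> a combination \<open>w\<close> of the rows already processed,
  chosen so that \<open>f (e\<^sub>i - w)\<close> is the component of \<open>f e\<^sub>i\<close> orthogonal to their images; since \<open>w\<close>
  lies in the span of the other rows, the determinant is unchanged.\<close>
lemma orthogonalizer_on_insert:
  fixes f :: "real^'n \<Rightarrow> 'a::euclidean_space"
  assumes f: "linear f" and P: "orthogonalizer_on f S P" and i: "i \<notin> S"
  obtains P' where "orthogonalizer_on f (insert i S) P'"
proof -
  from P have P_det: "det P = 1" and P_out: "\<forall>i. i \<notin> S \<longrightarrow> P $ i = axis i 1"
    and P_in: "\<forall>i\<in>S. P$i$i = 1 \<and> (\<forall>k. k \<notin> S \<longrightarrow> P$i$k = 0)"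
    and P_orth: "\<forall>i\<in>S. \<forall>j\<in>S. i \<noteq> j \<longrightarrow> orthogonal (f (P$i)) (f (P$j))"
    unfolding orthogonalizer_on_def by simp_all
  define R where "R = (\<lambda>j. P $ j) ` S"
  obtain y z where y: "y \<in> span (f ` R)" and z: "\<And>w. w \<in> span (f ` R) \<Longrightarrow> orthogonal z w"
    and yz: "f (axis i 1) = y + z"
    using orthogonal_subspace_decomp_exists[of "f ` R" "f (axis i 1)"] by blast
  from y obtain w where w: "w \<in> span R" and yw: "y = f w"
    using span_linear_image[OF f, of R] by auto
  have w_out: "w $ k = 0" if "k \<notin> S" for k
    using w by (rule span_component_eq_0) (use P_in that in \<open>auto simp: R_def\<close>)
  define P' where "P' = (\<chi> k. if k = i then axis i 1 - w else P $ k)"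
  have P'_row: "P' $ k = (if k = i then axis i 1 - w else P $ k)" for k
    by (simp add: P'_def)
  have "det P' = det P"
  proof -
    have "R \<subseteq> {row j P |j. j \<noteq> i}" using i by (auto simp: R_def row_eq_vec_nth)
    then have "w \<in> span {row j P |j. j \<noteq> i}" using w span_mono by blast
    then have "-w \<in> vec.span {row j P |j. j \<noteq> i}"
      unfolding span_vec_eq by (rule span_neg)
    from det_row_span[OF this]
    have "det (\<chi> k. if k = i then row i P + - w else row k P) = det P" .
    moreover have "(\<chi> k. if k = i then row i P + - w else row k P) = P'"
      using P_out i by (simp add: P'_def row_eq_vec_nth vec_eq_iff)
    ultimately show ?thesis by simp
  qed
  have f_new_row: "f (axis i 1 - w) = z"
    using yz yw f by (simp add: linear_diff)
  have z_orth: "orthogonal z (f (P $ j))" if "j \<in> S" for j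
    using z that by (auto simp: R_def intro: span_base)
  have "orthogonal (f (P' $ k)) (f (P' $ l))"
    if "k \<in> insert i S" "l \<in> insert i S" "k \<noteq> l" for k l
    using that P_orth z_orth i
    by (cases "k = i"; cases "l = i") (auto simp: P'_row f_new_row orthogonal_commute)
  moreover have "P' $ k $ k = 1 \<and> (\<forall>l. l \<notin> insert i S \<longrightarrow> P' $ k $ l = 0)"
    if "k \<in> insert i S" for k
    using that P_in w_out i by (auto simp: P'_row axis_def)
  ultimately have "orthogonalizer_on f (insert i S) P'"
    using \<open>det P' = det P\<close> P_det P_out unfolding orthogonalizer_on_def by (simp add: P'_row)
  then show thesis by (rule that)
qed

lemma orthogonalizer_on_exists:
  fixes f :: "real^'n \<Rightarrow> 'a::euclidean_space"
  assumes "linear f"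
  shows "\<exists>P. orthogonalizer_on f S P"
proof -
  have "finite S" by simp
  then show ?thesis
  proof (induction S rule: finite_induct)
    case empty
    show ?case using orthogonalizer_on_empty by blast
  next
    case (insert i S)
    then show ?case using orthogonalizer_on_insert[OF assms] by metis
  qed
qed

lemma unimodular_orthogonalizer:
  fixes f :: "real^'n \<Rightarrow> 'a::euclidean_space"
  assumes "linear f"
  obtains P :: "real^'n^'n" where "det P = 1" and "\<And>i. P$i$i = 1"
    and "\<And>i j. i \<noteq> j \<Longrightarrow> orthogonal (f (P$i)) (f (P$j))"
proof -
  obtain P where "orthogonalizer_on f UNIV P"
    using orthogonalizer_on_exists[OF assms] by blast
  then have "det P = 1" "\<And>i. P$i$i = 1" "\<And>i j. i \<noteq> j \<Longrightarrow> orthogonal (f (P$i)) (f (P$j))"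
    by (simp_all add: orthogonalizer_on_def)
  then show thesis by (rule that)
qed

lemma det_mult_transpose_orthogonal_rows:
  fixes B :: "real^'m^'n"
  assumes "\<And>i j. i \<noteq> j \<Longrightarrow> orthogonal (row i B) (row j B)"
  shows "det (B ** transpose B) = (\<Prod>i\<in>UNIV. norm (row i B) ^ 2)"
proof -
  have "det (B ** transpose B) = (\<Prod>i\<in>UNIV. (B ** transpose B) $ i $ i)"
    using assms by (intro det_diagonal) (simp add: matrix_mult_transpose_dot_row orthogonal_def)
  then show ?thesis by (simp add: matrix_mult_transpose_dot_row power2_norm_eq_inner)
qed

lemma row_matrix_matrix_mult: "row i ((P::real^'n^'k) ** (A::real^'m^'n)) = transpose A *v (P $ i)"
  by (simp add: vec_eq_iff row_def matrix_matrix_mult_def matrix_vector_mult_def transpose_def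
      mult.commute)

lemma det_mult_transpose_ge_power:
  fixes A :: "real^'m^'n"
  assumes c: "0 \<le> c" and bound: "\<And>v. c * norm v \<le> norm (transpose A *v v)"
  shows "c ^ (2 * CARD('n)) \<le> det (A ** transpose A)"
proof -
  obtain P :: "real^'n^'n" where P_det: "det P = 1" and P_diag: "\<And>i. P$i$i = 1"
      and P_orth: "\<And>i j. i \<noteq> j \<Longrightarrow> orthogonal (transpose A *v (P$i)) (transpose A *v (P$j))"
    using unimodular_orthogonalizer[OF matrix_vector_mul_linear] by blast
  have "(P ** A) ** transpose (P ** A) = P ** (A ** transpose A) ** transpose P"
    by (simp add: matrix_transpose_mul matrix_mul_assoc)
  then have "det (A ** transpose A) = det ((P ** A) ** transpose (P ** A))"
    using P_det by (simp add: det_mul det_transpose)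
  also have "\<dots> = (\<Prod>i\<in>UNIV. norm (transpose A *v (P $ i)) ^ 2)"
    using P_orth by (simp add: det_mult_transpose_orthogonal_rows row_matrix_matrix_mult
        del: transpose_matrix_vector)
  finally have det_eq: "det (A ** transpose A) = (\<Prod>i\<in>UNIV. norm (transpose A *v (P $ i)) ^ 2)" .
  have "c \<le> norm (transpose A *v (P $ i))" for i
  proof -
    have "1 \<le> norm (P $ i)" using component_le_norm_cart[of "P $ i" i] P_diag by simp
    then have "c \<le> c * norm (P $ i)" using c by (simp add: mult_le_cancel_left1)
    then show ?thesis using bound order_trans by blast
  qed
  then have "(\<Prod>i\<in>(UNIV::'n set). c ^ 2) \<le> det (A ** transpose A)"
    unfolding det_eq using c by (intro prod_mono) (simp add: power_mono)
  then show ?thesis by (simp add: power_mult)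
qed

theorem proposition11:
  fixes A :: "real^'m^'n"
  assumes unit_cols: "\<forall>j. norm (column j A) = 1"
    and spans: "{A *v l | l. \<forall>j. 0 \<le> l $ j} = UNIV"
  shows "det (A ** transpose A) \<ge> rho A ^ (2 * CARD('n))"
  using det_mult_transpose_ge_power[OF rho_nonneg rho_mult_norm_le] .

end
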